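(* Let $(\{T_g\}_{g\in G},\{\gamma_{g,h}\}_{g,h\in G},u)$ be a (global) action of a group $G$ on a (strict) monoidal category $\mathcal{C}$, and let $X$ be an object of $\mathcal{C}$. (a) Given a family $\{\sigma^X_g\}_{g\in G}$ making $(X,\{\sigma^X_g\})$ a partially $G$-equivariant object, there is a family $\{\theta_g\}_{g\in G}$ making $(X,\{\theta_g\})$ a (global) $G$-equivariant object. (b) Conversely, given a family $\{\theta_g\}_{g\in G}$ making $(X,\{\theta_g\})$ a $G$-equivariant object, there is a family $\{\sigma^X_g\}_{g\in G}$ making $(X,\{\sigma^X_g\})$ a partially $G$-equivariant object.
   Context: A (global) action of $G$ (unit $e$) on the monoidal category $\mathcal{C}$ consists of monoidal auto-equivalences $(T_g,J^g,J^{g0})$ of $\mathcal{C}$ (with $J^g\colon T_g(-)\otimes T_g(-)\Rightarrow T_g(-\otimes-)$ a natural isomorphism satisfying the hexagon axiom and $J^{g0}\colon\mathbb{1}\to T_g(\mathbb{1})$ an isomorphism compatible with the unit constraints), monoidal natural isomorphisms $\gamma_{g,h}\colon T_gT_h\Rightarrow T_{gh}$ and $u\colon\mathrm{Id}_{\mathcal{C}}\Rightarrow T_e$, such that $(\gamma_{gh,k})_X\circ(\gamma_{g,h})_{T_k(X)}=(\gamma_{g,hk})_X\circ T_g((\gamma_{h,k})_X)$, and $u_{T_g(X)}$, $(\gamma_{e,g})_X$ are mutually inverse, as are $T_g(u_X)$, $(\gamma_{g,e})_X$. A $G$-equivariant object is a pair $(X,\{\theta_g\}_{g\in G})$ with isomorphisms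 $\theta_g\colon T_g(X)\to X$ such that $\theta_{gh}\circ(\gamma_{g,h})_X=\theta_g\circ T_g(\theta_h)$ for all $g,h$ and $\theta_e\circ u_X=\mathrm{id}_X$. A partially $G$-equivariant object is a pair $(X,\{\sigma^X_g\}_{g\in G})$ with natural isomorphisms $\sigma^X_g\colon T_g(X\otimes-)\Rightarrow X\otimes T_g(-)$ such that for all $g,h\in G$ and objects $Y$: $(\sigma^X_{gh})_Y\circ(\gamma_{g,h})_{X\otimes Y}=(X\otimes(\gamma_{g,h})_Y)\circ(\sigma^X_g)_{T_h(Y)}\circ T_g((\sigma^X_h)_Y)$, and $(\sigma^X_e)_Y\circ u_{X\otimes Y}=X\otimes u_Y$. *)

theory Defs
  imports "HOL-Algebra.Group"
begin

text \<open>Strict monoidal categories, presented via objects, hom-sets, composition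
  (cmp g f = g after f), identities, and the tensor product on objects and morphisms.\<close>

record ('o, 'm) smcat =
  obj  :: "'o set"
  hom  :: "'o \<Rightarrow> 'o \<Rightarrow> 'm set"
  cmp  :: "'m \<Rightarrow> 'm \<Rightarrow> 'm"
  idm  :: "'o \<Rightarrow> 'm"
  tns  :: "'o \<Rightarrow> 'o \<Rightarrow> 'o"
  tnsm :: "'m \<Rightarrow> 'm \<Rightarrow> 'm"
  unt  :: "'o"

definition is_category :: "('o, 'm, 'x) smcat_scheme \<Rightarrow> bool" where
  "is_category C \<longleftrightarrow>
     (\<forall>a b f. f \<in> hom C a b \<longrightarrow> a \<in> obj C \<and> b \<in> obj C) \<and>
     (\<forall>a \<in> obj C. idm C a \<in> hom C a a) \<and>
     (\<forall>a b c f g. f \<in> hom C a b \<longrightarrow> g \<in> hom C b c \<longrightarrow> cmp C g f \<in> hom C a c) \<and>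
     (\<forall>a b f. f \<in> hom C a b \<longrightarrow> cmp C (idm C b) f = f \<and> cmp C f (idm C a) = f) \<and>
     (\<forall>a b c d f g h. f \<in> hom C a b \<longrightarrow> g \<in> hom C b c \<longrightarrow> h \<in> hom C c d \<longrightarrow>
        cmp C h (cmp C g f) = cmp C (cmp C h g) f)"

definition is_strict_monoidal :: "('o, 'm, 'x) smcat_scheme \<Rightarrow> bool" where
  "is_strict_monoidal C \<longleftrightarrow> is_category C \<and>
     unt C \<in> obj C \<and>
     (\<forall>a \<in> obj C. \<forall>b \<in> obj C. tns C a b \<in> obj C) \<and>
     (\<forall>a b c d f g. f \<in> hom C a b \<longrightarrow> g \<in> hom C c d \<longrightarrow>
        tnsm C f g \<in> hom C (tns C a c) (tns C b d)) \<and>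
     (\<forall>a \<in> obj C. \<forall>b \<in> obj C. tnsm C (idm C a) (idm C b) = idm C (tns C a b)) \<and>
     (\<forall>a b c a' b' c' f f' g g'. f \<in> hom C a b \<longrightarrow> f' \<in> hom C b c \<longrightarrow>
        g \<in> hom C a' b' \<longrightarrow> g' \<in> hom C b' c' \<longrightarrow>
        tnsm C (cmp C f' f) (cmp C g' g) = cmp C (tnsm C f' g') (tnsm C f g)) \<and>
     (\<forall>a \<in> obj C. \<forall>b \<in> obj C. \<forall>c \<in> obj C. tns C (tns C a b) c = tns C a (tns C b c)) \<and>
     (\<forall>a \<in> obj C. tns C (unt C) a = a \<and> tns C a (unt C) = a) \<and>
     (\<forall>a b c d e k f g h. f \<in> hom C a b \<longrightarrow> g \<in> hom C c d \<longrightarrow> h \<in> hom C e k \<longrightarrow>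
        tnsm C (tnsm C f g) h = tnsm C f (tnsm C g h)) \<and>
     (\<forall>a b f. f \<in> hom C a b \<longrightarrow>
        tnsm C (idm C (unt C)) f = f \<and> tnsm C f (idm C (unt C)) = f)"

definition is_iso :: "('o, 'm, 'x) smcat_scheme \<Rightarrow> 'm \<Rightarrow> 'o \<Rightarrow> 'o \<Rightarrow> bool" where
  "is_iso C f a b \<longleftrightarrow> f \<in> hom C a b \<and>
     (\<exists>g \<in> hom C b a. cmp C g f = idm C a \<and> cmp C f g = idm C b)"

definition is_functor :: "('o, 'm, 'x) smcat_scheme \<Rightarrow> ('o \<Rightarrow> 'o) \<Rightarrow> ('m \<Rightarrow> 'm) \<Rightarrow> bool" where
  "is_functor C F Fm \<longleftrightarrow>
     (\<forall>a \<in> obj C. F a \<in> obj C) \<and>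
     (\<forall>a b f. f \<in> hom C a b \<longrightarrow> Fm f \<in> hom C (F a) (F b)) \<and>
     (\<forall>a \<in> obj C. Fm (idm C a) = idm C (F a)) \<and>
     (\<forall>a b c f g. f \<in> hom C a b \<longrightarrow> g \<in> hom C b c \<longrightarrow> Fm (cmp C g f) = cmp C (Fm g) (Fm f))"

definition is_nat_trans ::
  "('o, 'm, 'x) smcat_scheme \<Rightarrow> ('o \<Rightarrow> 'o) \<Rightarrow> ('m \<Rightarrow> 'm) \<Rightarrow> ('o \<Rightarrow> 'o) \<Rightarrow> ('m \<Rightarrow> 'm)
     \<Rightarrow> ('o \<Rightarrow> 'm) \<Rightarrow> bool" where
  "is_nat_trans C F Fm G Gm \<eta> \<longleftrightarrow>
     (\<forall>a \<in> obj C. \<eta> a \<in> hom C (F a) (G a)) \<and>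
     (\<forall>a b f. f \<in> hom C a b \<longrightarrow> cmp C (\<eta> b) (Fm f) = cmp C (Gm f) (\<eta> a))"

definition is_nat_iso ::
  "('o, 'm, 'x) smcat_scheme \<Rightarrow> ('o \<Rightarrow> 'o) \<Rightarrow> ('m \<Rightarrow> 'm) \<Rightarrow> ('o \<Rightarrow> 'o) \<Rightarrow> ('m \<Rightarrow> 'm)
     \<Rightarrow> ('o \<Rightarrow> 'm) \<Rightarrow> bool" where
  "is_nat_iso C F Fm G Gm \<eta> \<longleftrightarrow> is_nat_trans C F Fm G Gm \<eta> \<and>
     (\<forall>a \<in> obj C. is_iso C (\<eta> a) (F a) (G a))"

definition is_equivalence :: "('o, 'm, 'x) smcat_scheme \<Rightarrow> ('o \<Rightarrow> 'o) \<Rightarrow> ('m \<Rightarrow> 'm) \<Rightarrow> bool" where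
  "is_equivalence C F Fm \<longleftrightarrow> is_functor C F Fm \<and>
     (\<exists>S Sm \<eta> \<epsilon>. is_functor C S Sm \<and>
        is_nat_iso C (\<lambda>a. a) (\<lambda>f. f) (\<lambda>a. S (F a)) (\<lambda>f. Sm (Fm f)) \<eta> \<and>
        is_nat_iso C (\<lambda>a. F (S a)) (\<lambda>f. Fm (Sm f)) (\<lambda>a. a) (\<lambda>f. f) \<epsilon>)"

text \<open>(Strong) monoidal functors on a strict monoidal category:
  J a b : F a \<otimes> F b \<rightarrow> F (a \<otimes> b) and J0 : 1 \<rightarrow> F 1 (the associator and unitors are identities).\<close>

definition is_monoidal_functor ::
  "('o, 'm, 'x) smcat_scheme \<Rightarrow> ('o \<Rightarrow> 'o) \<Rightarrow> ('m \<Rightarrow> 'm) \<Rightarrow> ('o \<Rightarrow> 'o \<Rightarrow> 'm) \<Rightarrow> 'm \<Rightarrow> bool" where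
  "is_monoidal_functor C F Fm J J0 \<longleftrightarrow> is_functor C F Fm \<and>
     (\<forall>a \<in> obj C. \<forall>b \<in> obj C. is_iso C (J a b) (tns C (F a) (F b)) (F (tns C a b))) \<and>
     (\<forall>a a' b b' f g. f \<in> hom C a a' \<longrightarrow> g \<in> hom C b b' \<longrightarrow>
        cmp C (J a' b') (tnsm C (Fm f) (Fm g)) = cmp C (Fm (tnsm C f g)) (J a b)) \<and>
     (\<forall>a \<in> obj C. \<forall>b \<in> obj C. \<forall>c \<in> obj C.
        cmp C (J (tns C a b) c) (tnsm C (J a b) (idm C (F c))) =
        cmp C (J a (tns C b c)) (tnsm C (idm C (F a)) (J b c))) \<and>
     is_iso C J0 (unt C) (F (unt C)) \<and>
     (\<forall>a \<in> obj C. cmp C (J (unt C) a) (tnsm C J0 (idm C (F a))) = idm C (F a) \<and>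
                  cmp C (J a (unt C)) (tnsm C (idm C (F a)) J0) = idm C (F a))"

definition is_monoidal_autoequivalence ::
  "('o, 'm, 'x) smcat_scheme \<Rightarrow> ('o \<Rightarrow> 'o) \<Rightarrow> ('m \<Rightarrow> 'm) \<Rightarrow> ('o \<Rightarrow> 'o \<Rightarrow> 'm) \<Rightarrow> 'm \<Rightarrow> bool" where
  "is_monoidal_autoequivalence C F Fm J J0 \<longleftrightarrow>
     is_monoidal_functor C F Fm J J0 \<and> is_equivalence C F Fm"

definition is_monoidal_nat_iso ::
  "('o, 'm, 'x) smcat_scheme
     \<Rightarrow> ('o \<Rightarrow> 'o) \<Rightarrow> ('m \<Rightarrow> 'm) \<Rightarrow> ('o \<Rightarrow> 'o \<Rightarrow> 'm) \<Rightarrow> 'm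
     \<Rightarrow> ('o \<Rightarrow> 'o) \<Rightarrow> ('m \<Rightarrow> 'm) \<Rightarrow> ('o \<Rightarrow> 'o \<Rightarrow> 'm) \<Rightarrow> 'm
     \<Rightarrow> ('o \<Rightarrow> 'm) \<Rightarrow> bool" where
  "is_monoidal_nat_iso C F Fm JF JF0 G Gm JG JG0 \<eta> \<longleftrightarrow>
     is_nat_iso C F Fm G Gm \<eta> \<and>
     (\<forall>a \<in> obj C. \<forall>b \<in> obj C.
        cmp C (\<eta> (tns C a b)) (JF a b) = cmp C (JG a b) (tnsm C (\<eta> a) (\<eta> b))) \<and>
     cmp C (\<eta> (unt C)) JF0 = JG0"

definition is_action ::
  "('g, 'y) monoid_scheme \<Rightarrow> ('o, 'm, 'x) smcat_scheme
     \<Rightarrow> ('g \<Rightarrow> 'o \<Rightarrow> 'o) \<Rightarrow> ('g \<Rightarrow> 'm \<Rightarrow> 'm) \<Rightarrow> ('g \<Rightarrow> 'o \<Rightarrow> 'o \<Rightarrow> 'm) \<Rightarrow> ('g \<Rightarrow> 'm)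
     \<Rightarrow> ('g \<Rightarrow> 'g \<Rightarrow> 'o \<Rightarrow> 'm) \<Rightarrow> ('o \<Rightarrow> 'm) \<Rightarrow> bool" where
  "is_action G C T Tm J J0 \<gamma> u \<longleftrightarrow>
     group G \<and> is_strict_monoidal C \<and>
     (\<forall>g \<in> carrier G. is_monoidal_autoequivalence C (T g) (Tm g) (J g) (J0 g)) \<and>
     (\<forall>g \<in> carrier G. \<forall>h \<in> carrier G.
        is_monoidal_nat_iso C
          (\<lambda>a. T g (T h a)) (\<lambda>f. Tm g (Tm h f))
          (\<lambda>a b. cmp C (Tm g (J h a b)) (J g (T h a) (T h b))) (cmp C (Tm g (J0 h)) (J0 g))
          (T (g \<otimes>\<^bsub>G\<^esub> h)) (Tm (g \<otimes>\<^bsub>G\<^esub> h)) (J (g \<otimes>\<^bsub>G\<^esub> h)) (J0 (g \<otimes>\<^bsub>G\<^esub> h))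
          (\<gamma> g h)) \<and>
     is_monoidal_nat_iso C
       (\<lambda>a. a) (\<lambda>f. f) (\<lambda>a b. idm C (tns C a b)) (idm C (unt C))
       (T \<one>\<^bsub>G\<^esub>) (Tm \<one>\<^bsub>G\<^esub>) (J \<one>\<^bsub>G\<^esub>) (J0 \<one>\<^bsub>G\<^esub>) u \<and>
     (\<forall>g \<in> carrier G. \<forall>h \<in> carrier G. \<forall>k \<in> carrier G. \<forall>X \<in> obj C.
        cmp C (\<gamma> (g \<otimes>\<^bsub>G\<^esub> h) k X) (\<gamma> g h (T k X)) =
        cmp C (\<gamma> g (h \<otimes>\<^bsub>G\<^esub> k) X) (Tm g (\<gamma> h k X))) \<and>
     (\<forall>g \<in> carrier G. \<forall>X \<in> obj C.
        cmp C (\<gamma> \<one>\<^bsub>G\<^esub> g X) (u (T g X)) = idm C (T g X) \<and>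
        cmp C (u (T g X)) (\<gamma> \<one>\<^bsub>G\<^esub> g X) = idm C (T \<one>\<^bsub>G\<^esub> (T g X)) \<and>
        cmp C (\<gamma> g \<one>\<^bsub>G\<^esub> X) (Tm g (u X)) = idm C (T g X) \<and>
        cmp C (Tm g (u X)) (\<gamma> g \<one>\<^bsub>G\<^esub> X) = idm C (T g (T \<one>\<^bsub>G\<^esub> X)))"

definition is_equivariant_object ::
  "('g, 'y) monoid_scheme \<Rightarrow> ('o, 'm, 'x) smcat_scheme
     \<Rightarrow> ('g \<Rightarrow> 'o \<Rightarrow> 'o) \<Rightarrow> ('g \<Rightarrow> 'm \<Rightarrow> 'm)
     \<Rightarrow> ('g \<Rightarrow> 'g \<Rightarrow> 'o \<Rightarrow> 'm) \<Rightarrow> ('o \<Rightarrow> 'm) \<Rightarrow> 'o \<Rightarrow> ('g \<Rightarrow> 'm) \<Rightarrow> bool" where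
  "is_equivariant_object G C T Tm \<gamma> u X \<theta> \<longleftrightarrow>
     (\<forall>g \<in> carrier G. is_iso C (\<theta> g) (T g X) X) \<and>
     (\<forall>g \<in> carrier G. \<forall>h \<in> carrier G.
        cmp C (\<theta> (g \<otimes>\<^bsub>G\<^esub> h)) (\<gamma> g h X) = cmp C (\<theta> g) (Tm g (\<theta> h))) \<and>
     cmp C (\<theta> \<one>\<^bsub>G\<^esub>) (u X) = idm C X"

definition is_partially_equivariant_object ::
  "('g, 'y) monoid_scheme \<Rightarrow> ('o, 'm, 'x) smcat_scheme
     \<Rightarrow> ('g \<Rightarrow> 'o \<Rightarrow> 'o) \<Rightarrow> ('g \<Rightarrow> 'm \<Rightarrow> 'm)
     \<Rightarrow> ('g \<Rightarrow> 'g \<Rightarrow> 'o \<Rightarrow> 'm) \<Rightarrow> ('o \<Rightarrow> 'm) \<Rightarrow> 'o \<Rightarrow> ('g \<Rightarrow> 'o \<Rightarrow> 'm) \<Rightarrow> bool" where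
  "is_partially_equivariant_object G C T Tm \<gamma> u X \<sigma> \<longleftrightarrow>
     (\<forall>g \<in> carrier G.
        is_nat_iso C
          (\<lambda>Y. T g (tns C X Y)) (\<lambda>f. Tm g (tnsm C (idm C X) f))
          (\<lambda>Y. tns C X (T g Y)) (\<lambda>f. tnsm C (idm C X) (Tm g f))
          (\<sigma> g)) \<and>
     (\<forall>g \<in> carrier G. \<forall>h \<in> carrier G. \<forall>Y \<in> obj C.
        cmp C (\<sigma> (g \<otimes>\<^bsub>G\<^esub> h) Y) (\<gamma> g h (tns C X Y)) =
        cmp C (tnsm C (idm C X) (\<gamma> g h Y)) (cmp C (\<sigma> g (T h Y)) (Tm g (\<sigma> h Y)))) \<and>
     (\<forall>Y \<in> obj C. cmp C (\<sigma> \<one>\<^bsub>G\<^esub> Y) (u (tns C X Y)) = tnsm C (idm C X) (u Y))"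

end

theory Submission
  imports Defs
begin

(* Given a partially equivariant structure sigma on X, tensoring it with any equivariant
   object (Y, phi) gives the equivariant structure (X (x) phi_g) o sigma_g(Y) on X (x) Y.
   The tensor unit with the inverses of the unit constraints J0_g is equivariant, because each
   gamma_{g,h} is monoidal; taking Y = 1 yields theta_g = (X (x) J0_g^-1) o sigma_g(1).
   Conversely, an equivariant structure theta induces sigma_g(Y) = (theta_g (x) T_g Y) o J^g_{X,Y}^-1,
   whose naturality, cocycle and unit conditions come from the naturality of J, the monoidality
   of gamma and the monoidality of u. *)

definition inv_arr :: "('o, 'm, 'x) smcat_scheme \<Rightarrow> 'm \<Rightarrow> 'o \<Rightarrow> 'o \<Rightarrow> 'm" where
  "inv_arr C f a b = (SOME g. g \<in> hom C b a \<and> cmp C g f = idm C a \<and> cmp C f g = idm C b)"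

lemma iso_in_hom: "is_iso C f a b \<Longrightarrow> f \<in> hom C a b"
  unfolding is_iso_def by blast

lemma
  assumes "is_iso C f a b"
  shows inv_arr_in_hom: "inv_arr C f a b \<in> hom C b a"
    and inv_arr_left: "cmp C (inv_arr C f a b) f = idm C a"
    and inv_arr_right: "cmp C f (inv_arr C f a b) = idm C b"
proof -
  from assms obtain g where "g \<in> hom C b a \<and> cmp C g f = idm C a \<and> cmp C f g = idm C b"
    unfolding is_iso_def by blast
  then have "inv_arr C f a b \<in> hom C b a \<and> cmp C (inv_arr C f a b) f = idm C a \<and>
      cmp C f (inv_arr C f a b) = idm C b"
    unfolding inv_arr_def by (rule someI)
  then show "inv_arr C f a b \<in> hom C b a" "cmp C (inv_arr C f a b) f = idm C a"
      "cmp C f (inv_arr C f a b) = idm C b"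
    by blast+
qed

lemma iso_inv_arr:
  assumes "is_iso C f a b"
  shows "is_iso C (inv_arr C f a b) b a"
  unfolding is_iso_def
  using iso_in_hom[OF assms] inv_arr_in_hom[OF assms] inv_arr_left[OF assms] inv_arr_right[OF assms]
  by blast

lemma
  assumes "is_functor C F Fm"
  shows functor_obj: "a \<in> obj C \<Longrightarrow> F a \<in> obj C"
    and functor_in_hom: "f \<in> hom C a b \<Longrightarrow> Fm f \<in> hom C (F a) (F b)"
    and functor_id: "a \<in> obj C \<Longrightarrow> Fm (idm C a) = idm C (F a)"
    and functor_cmp: "f \<in> hom C a b \<Longrightarrow> g \<in> hom C b c \<Longrightarrow> Fm (cmp C g f) = cmp C (Fm g) (Fm f)"
  using assms unfolding is_functor_def by simp_all

lemma
  assumes "is_equivariant_object G C T Tm \<gamma> u X \<theta>"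
  shows equivariant_object_iso: "g \<in> carrier G \<Longrightarrow> is_iso C (\<theta> g) (T g X) X"
    and equivariant_object_cocycle: "g \<in> carrier G \<Longrightarrow> h \<in> carrier G \<Longrightarrow>
      cmp C (\<theta> (g \<otimes>\<^bsub>G\<^esub> h)) (\<gamma> g h X) = cmp C (\<theta> g) (Tm g (\<theta> h))"
    and equivariant_object_unit: "cmp C (\<theta> \<one>\<^bsub>G\<^esub>) (u X) = idm C X"
  using assms unfolding is_equivariant_object_def by simp_all

lemma
  assumes "is_partially_equivariant_object G C T Tm \<gamma> u X \<sigma>"
  shows partially_equivariant_object_iso: "g \<in> carrier G \<Longrightarrow> Y \<in> obj C \<Longrightarrow>
      is_iso C (\<sigma> g Y) (T g (tns C X Y)) (tns C X (T g Y))"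
    and partially_equivariant_object_natural: "g \<in> carrier G \<Longrightarrow> f \<in> hom C Y Y' \<Longrightarrow>
      cmp C (\<sigma> g Y') (Tm g (tnsm C (idm C X) f)) = cmp C (tnsm C (idm C X) (Tm g f)) (\<sigma> g Y)"
    and partially_equivariant_object_cocycle: "g \<in> carrier G \<Longrightarrow> h \<in> carrier G \<Longrightarrow> Y \<in> obj C \<Longrightarrow>
      cmp C (\<sigma> (g \<otimes>\<^bsub>G\<^esub> h) Y) (\<gamma> g h (tns C X Y)) =
      cmp C (tnsm C (idm C X) (\<gamma> g h Y)) (cmp C (\<sigma> g (T h Y)) (Tm g (\<sigma> h Y)))"
    and partially_equivariant_object_unit: "Y \<in> obj C \<Longrightarrow>
      cmp C (\<sigma> \<one>\<^bsub>G\<^esub> Y) (u (tns C X Y)) = tnsm C (idm C X) (u Y)"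
  using assms unfolding is_partially_equivariant_object_def is_nat_iso_def is_nat_trans_def
  by simp_all

lemma equivariant_object_in_hom:
  "is_equivariant_object G C T Tm \<gamma> u X \<theta> \<Longrightarrow> g \<in> carrier G \<Longrightarrow> \<theta> g \<in> hom C (T g X) X"
  by (rule iso_in_hom[OF equivariant_object_iso])

lemma partially_equivariant_object_in_hom:
  "is_partially_equivariant_object G C T Tm \<gamma> u X \<sigma> \<Longrightarrow> g \<in> carrier G \<Longrightarrow> Y \<in> obj C \<Longrightarrow>
   \<sigma> g Y \<in> hom C (T g (tns C X Y)) (tns C X (T g Y))"
  by (rule iso_in_hom[OF partially_equivariant_object_iso])

locale strict_monoidal_category =
  fixes C :: "('o, 'm, 'x) smcat_scheme"
  assumes strict_monoidal: "is_strict_monoidal C"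
begin

lemma category: "is_category C"
  using strict_monoidal unfolding is_strict_monoidal_def by simp

lemma hom_dom_obj: "f \<in> hom C a b \<Longrightarrow> a \<in> obj C"
  and hom_cod_obj: "f \<in> hom C a b \<Longrightarrow> b \<in> obj C"
  using category unfolding is_category_def by blast+

lemma id_in_hom [intro]: "a \<in> obj C \<Longrightarrow> idm C a \<in> hom C a a"
  using category unfolding is_category_def by blast

lemma comp_in_hom [intro]: "f \<in> hom C a b \<Longrightarrow> g \<in> hom C b c \<Longrightarrow> cmp C g f \<in> hom C a c"
  using category unfolding is_category_def by blast

lemma comp_id_left [simp]: "f \<in> hom C a b \<Longrightarrow> cmp C (idm C b) f = f"
  and comp_id_right [simp]: "f \<in> hom C a b \<Longrightarrow> cmp C f (idm C a) = f"
  using category unfolding is_category_def by simp_all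

lemma comp_assoc:
  "f \<in> hom C a b \<Longrightarrow> g \<in> hom C b c \<Longrightarrow> h \<in> hom C c d \<Longrightarrow>
   cmp C (cmp C h g) f = cmp C h (cmp C g f)"
  using category unfolding is_category_def by simp

lemma unit_obj [intro]: "unt C \<in> obj C"
  and tensor_obj [intro]: "a \<in> obj C \<Longrightarrow> b \<in> obj C \<Longrightarrow> tns C a b \<in> obj C"
  and tensor_in_hom [intro]:
    "f \<in> hom C a b \<Longrightarrow> g \<in> hom C c d \<Longrightarrow> tnsm C f g \<in> hom C (tns C a c) (tns C b d)"
  using strict_monoidal unfolding is_strict_monoidal_def by simp_all

lemma tensor_id [simp]: "a \<in> obj C \<Longrightarrow> b \<in> obj C \<Longrightarrow> tnsm C (idm C a) (idm C b) = idm C (tns C a b)"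
  using strict_monoidal unfolding is_strict_monoidal_def by simp

lemma interchange:
  "f \<in> hom C a b \<Longrightarrow> f' \<in> hom C b c \<Longrightarrow> g \<in> hom C a' b' \<Longrightarrow> g' \<in> hom C b' c' \<Longrightarrow>
   tnsm C (cmp C f' f) (cmp C g' g) = cmp C (tnsm C f' g') (tnsm C f g)"
  using strict_monoidal unfolding is_strict_monoidal_def by simp

lemma tensor_unit_right [simp]: "a \<in> obj C \<Longrightarrow> tns C a (unt C) = a"
  using strict_monoidal unfolding is_strict_monoidal_def by simp

lemma inv_arr_unique:
  assumes f: "is_iso C f a b" and k: "k \<in> hom C b a" "cmp C k f = idm C a"
  shows "inv_arr C f a b = k"
proof -
  have "k = cmp C k (cmp C f (inv_arr C f a b))"
    using inv_arr_right[OF f] k(1) by simp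
  also have "\<dots> = cmp C (cmp C k f) (inv_arr C f a b)"
    using comp_assoc[OF inv_arr_in_hom[OF f] iso_in_hom[OF f] k(1)] by simp
  also have "\<dots> = inv_arr C f a b"
    using k(2) inv_arr_in_hom[OF f] by simp
  finally show ?thesis by simp
qed

lemma iso_id: "a \<in> obj C \<Longrightarrow> is_iso C (idm C a) a a"
  unfolding is_iso_def using id_in_hom comp_id_left by blast

lemma
  assumes f: "is_iso C f a b" and g: "is_iso C g b c"
  shows iso_cmp_inverse_left:
      "cmp C (cmp C (inv_arr C f a b) (inv_arr C g b c)) (cmp C g f) = idm C a"
    and iso_cmp_inverse_right:
      "cmp C (cmp C g f) (cmp C (inv_arr C f a b) (inv_arr C g b c)) = idm C c"
proof -
  note f' = iso_in_hom[OF f] and g' = iso_in_hom[OF g]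
    and fi = inv_arr_in_hom[OF f] and gi = inv_arr_in_hom[OF g]
  have "cmp C (inv_arr C g b c) (cmp C g f) = f"
    using comp_assoc[OF f' g' gi] inv_arr_left[OF g] f' by simp
  then show "cmp C (cmp C (inv_arr C f a b) (inv_arr C g b c)) (cmp C g f) = idm C a"
    using comp_assoc[OF comp_in_hom[OF f' g'] gi fi] inv_arr_left[OF f] by simp
  have "cmp C f (cmp C (inv_arr C f a b) (inv_arr C g b c)) = inv_arr C g b c"
    using comp_assoc[OF gi fi f'] inv_arr_right[OF f] gi by simp
  then show "cmp C (cmp C g f) (cmp C (inv_arr C f a b) (inv_arr C g b c)) = idm C c"
    using comp_assoc[OF comp_in_hom[OF gi fi] f' g'] inv_arr_right[OF g] by simp
qed

lemma iso_cmp: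
  assumes f: "is_iso C f a b" and g: "is_iso C g b c"
  shows "is_iso C (cmp C g f) a c"
  unfolding is_iso_def
  using comp_in_hom[OF iso_in_hom[OF f] iso_in_hom[OF g]]
    comp_in_hom[OF inv_arr_in_hom[OF g] inv_arr_in_hom[OF f]]
    iso_cmp_inverse_left[OF f g] iso_cmp_inverse_right[OF f g] by blast

lemma inv_arr_cmp:
  assumes f: "is_iso C f a b" and g: "is_iso C g b c"
  shows "inv_arr C (cmp C g f) a c = cmp C (inv_arr C f a b) (inv_arr C g b c)"
  by (rule inv_arr_unique[OF iso_cmp[OF f g] comp_in_hom[OF inv_arr_in_hom[OF g] inv_arr_in_hom[OF f]]
        iso_cmp_inverse_left[OF f g]])

lemma iso_tensor:
  assumes f: "is_iso C f a b" and g: "is_iso C g c d"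
  shows "is_iso C (tnsm C f g) (tns C a c) (tns C b d)"
proof -
  note homs = iso_in_hom[OF f] iso_in_hom[OF g] inv_arr_in_hom[OF f] inv_arr_in_hom[OF g]
  have objs: "a \<in> obj C" "b \<in> obj C" "c \<in> obj C" "d \<in> obj C"
    using homs hom_dom_obj hom_cod_obj by blast+
  have "cmp C (tnsm C (inv_arr C f a b) (inv_arr C g c d)) (tnsm C f g) = idm C (tns C a c)"
    using interchange[of f a b "inv_arr C f a b" a g c d "inv_arr C g c d" c] homs objs
      inv_arr_left[OF f] inv_arr_left[OF g] by simp
  moreover have "cmp C (tnsm C f g) (tnsm C (inv_arr C f a b) (inv_arr C g c d)) = idm C (tns C b d)"
    using interchange[of "inv_arr C f a b" b a f b "inv_arr C g c d" d c g d] homs objs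
      inv_arr_right[OF f] inv_arr_right[OF g] by simp
  ultimately show ?thesis
    unfolding is_iso_def using homs by blast
qed

lemma inv_arr_square:
  assumes j: "is_iso C j a b" and j': "is_iso C j' c d"
    and x: "x \<in> hom C a c" and y: "y \<in> hom C b d"
    and square: "cmp C j' x = cmp C y j"
  shows "cmp C (inv_arr C j' c d) y = cmp C x (inv_arr C j a b)"
proof -
  note ji = inv_arr_in_hom[OF j] and j'i = inv_arr_in_hom[OF j']
  have "y = cmp C (cmp C y j) (inv_arr C j a b)"
    using comp_assoc[OF ji iso_in_hom[OF j] y] inv_arr_right[OF j] y by simp
  also have "\<dots> = cmp C j' (cmp C x (inv_arr C j a b))"
    using square comp_assoc[OF ji x iso_in_hom[OF j']] by simp
  finally have "cmp C (inv_arr C j' c d) y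
      = cmp C (cmp C (inv_arr C j' c d) j') (cmp C x (inv_arr C j a b))"
    using comp_assoc[OF comp_in_hom[OF ji x] iso_in_hom[OF j'] j'i] by simp
  then show ?thesis
    using inv_arr_left[OF j'] comp_in_hom[OF ji x] by simp
qed

lemma tensor_as_cmp:
  assumes f: "f \<in> hom C a b" and g: "g \<in> hom C c d"
  shows "tnsm C f g = cmp C (tnsm C f (idm C d)) (tnsm C (idm C a) g)"
    and "tnsm C f g = cmp C (tnsm C (idm C b) g) (tnsm C f (idm C c))"
  using interchange[OF id_in_hom f g id_in_hom] interchange[OF f id_in_hom id_in_hom g]
    f g hom_dom_obj hom_cod_obj by auto

lemma id_tensor_cmp:
  "a \<in> obj C \<Longrightarrow> f \<in> hom C b c \<Longrightarrow> g \<in> hom C c d \<Longrightarrow>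
   tnsm C (idm C a) (cmp C g f) = cmp C (tnsm C (idm C a) g) (tnsm C (idm C a) f)"
  using interchange[of "idm C a" a a "idm C a" a f b c g d] by auto

lemma cmp_tensor_id:
  "a \<in> obj C \<Longrightarrow> f \<in> hom C b c \<Longrightarrow> g \<in> hom C c d \<Longrightarrow>
   tnsm C (cmp C g f) (idm C a) = cmp C (tnsm C g (idm C a)) (tnsm C f (idm C a))"
  using interchange[of f b c g d "idm C a" a a "idm C a" a] by auto

lemma functor_iso:
  assumes F: "is_functor C F Fm" and f: "is_iso C f a b"
  shows "is_iso C (Fm f) (F a) (F b)"
proof -
  note homs = iso_in_hom[OF f] inv_arr_in_hom[OF f]
  have objs: "a \<in> obj C" "b \<in> obj C"
    using homs hom_dom_obj hom_cod_obj by blast+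
  have "cmp C (Fm (inv_arr C f a b)) (Fm f) = idm C (F a)"
    using functor_cmp[OF F homs] inv_arr_left[OF f] functor_id[OF F objs(1)] by simp
  moreover have "cmp C (Fm f) (Fm (inv_arr C f a b)) = idm C (F b)"
    using functor_cmp[OF F homs(2,1)] inv_arr_right[OF f] functor_id[OF F objs(2)] by simp
  ultimately show ?thesis
    unfolding is_iso_def using functor_in_hom[OF F homs(1)] functor_in_hom[OF F homs(2)] by blast
qed

lemma functor_inv_arr:
  assumes F: "is_functor C F Fm" and f: "is_iso C f a b"
  shows "inv_arr C (Fm f) (F a) (F b) = Fm (inv_arr C f a b)"
proof (rule inv_arr_unique[OF functor_iso[OF F f]])
  show "Fm (inv_arr C f a b) \<in> hom C (F b) (F a)"
    by (rule functor_in_hom[OF F inv_arr_in_hom[OF f]])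
  show "cmp C (Fm (inv_arr C f a b)) (Fm f) = idm C (F a)"
    using functor_cmp[OF F iso_in_hom[OF f] inv_arr_in_hom[OF f]] inv_arr_left[OF f]
      functor_id[OF F hom_dom_obj[OF iso_in_hom[OF f]]] by simp
qed

end

locale group_action =
  fixes G :: "('g, 'y) monoid_scheme" and C :: "('o, 'm, 'x) smcat_scheme"
    and T :: "'g \<Rightarrow> 'o \<Rightarrow> 'o" and Tm :: "'g \<Rightarrow> 'm \<Rightarrow> 'm"
    and J :: "'g \<Rightarrow> 'o \<Rightarrow> 'o \<Rightarrow> 'm" and J0 :: "'g \<Rightarrow> 'm"
    and \<gamma> :: "'g \<Rightarrow> 'g \<Rightarrow> 'o \<Rightarrow> 'm" and u :: "'o \<Rightarrow> 'm"
  assumes action: "is_action G C T Tm J J0 \<gamma> u"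

sublocale group_action \<subseteq> strict_monoidal_category C
  using action unfolding is_action_def by unfold_locales blast

context group_action
begin

lemma mult_closed [intro]: "g \<in> carrier G \<Longrightarrow> h \<in> carrier G \<Longrightarrow> g \<otimes>\<^bsub>G\<^esub> h \<in> carrier G"
  and one_closed [intro]: "\<one>\<^bsub>G\<^esub> \<in> carrier G"
proof -
  have "group G"
    using action unfolding is_action_def by blast
  then show "g \<in> carrier G \<Longrightarrow> h \<in> carrier G \<Longrightarrow> g \<otimes>\<^bsub>G\<^esub> h \<in> carrier G" "\<one>\<^bsub>G\<^esub> \<in> carrier G"
    by (simp_all add: group.is_monoid monoid.m_closed monoid.one_closed)
qed

lemma monoidal_functor: "g \<in> carrier G \<Longrightarrow> is_monoidal_functor C (T g) (Tm g) (J g) (J0 g)"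
  using action unfolding is_action_def is_monoidal_autoequivalence_def by blast

lemma T_functor: "g \<in> carrier G \<Longrightarrow> is_functor C (T g) (Tm g)"
  using monoidal_functor unfolding is_monoidal_functor_def by simp

lemma T_obj [intro]: "g \<in> carrier G \<Longrightarrow> a \<in> obj C \<Longrightarrow> T g a \<in> obj C"
  by (rule functor_obj[OF T_functor])

lemma Tm_in_hom [intro]: "g \<in> carrier G \<Longrightarrow> f \<in> hom C a b \<Longrightarrow> Tm g f \<in> hom C (T g a) (T g b)"
  by (rule functor_in_hom[OF T_functor])

lemma J_iso: "g \<in> carrier G \<Longrightarrow> a \<in> obj C \<Longrightarrow> b \<in> obj C \<Longrightarrow>
    is_iso C (J g a b) (tns C (T g a) (T g b)) (T g (tns C a b))"
  and J_natural: "g \<in> carrier G \<Longrightarrow> f \<in> hom C a a' \<Longrightarrow> k \<in> hom C b b' \<Longrightarrow>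
    cmp C (J g a' b') (tnsm C (Tm g f) (Tm g k)) = cmp C (Tm g (tnsm C f k)) (J g a b)"
  and J0_iso: "g \<in> carrier G \<Longrightarrow> is_iso C (J0 g) (unt C) (T g (unt C))"
  using monoidal_functor unfolding is_monoidal_functor_def by simp_all

lemma gamma_monoidal: "g \<in> carrier G \<Longrightarrow> h \<in> carrier G \<Longrightarrow> is_monoidal_nat_iso C
    (\<lambda>a. T g (T h a)) (\<lambda>f. Tm g (Tm h f))
    (\<lambda>a b. cmp C (Tm g (J h a b)) (J g (T h a) (T h b))) (cmp C (Tm g (J0 h)) (J0 g))
    (T (g \<otimes>\<^bsub>G\<^esub> h)) (Tm (g \<otimes>\<^bsub>G\<^esub> h)) (J (g \<otimes>\<^bsub>G\<^esub> h)) (J0 (g \<otimes>\<^bsub>G\<^esub> h)) (\<gamma> g h)"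
  using action unfolding is_action_def by blast

lemma gamma_iso: "g \<in> carrier G \<Longrightarrow> h \<in> carrier G \<Longrightarrow> a \<in> obj C \<Longrightarrow>
    is_iso C (\<gamma> g h a) (T g (T h a)) (T (g \<otimes>\<^bsub>G\<^esub> h) a)"
  and gamma_tensor: "g \<in> carrier G \<Longrightarrow> h \<in> carrier G \<Longrightarrow> a \<in> obj C \<Longrightarrow> b \<in> obj C \<Longrightarrow>
    cmp C (\<gamma> g h (tns C a b)) (cmp C (Tm g (J h a b)) (J g (T h a) (T h b)))
    = cmp C (J (g \<otimes>\<^bsub>G\<^esub> h) a b) (tnsm C (\<gamma> g h a) (\<gamma> g h b))"
  and gamma_unit: "g \<in> carrier G \<Longrightarrow> h \<in> carrier G \<Longrightarrow>
    cmp C (\<gamma> g h (unt C)) (cmp C (Tm g (J0 h)) (J0 g)) = J0 (g \<otimes>\<^bsub>G\<^esub> h)"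
  using gamma_monoidal unfolding is_monoidal_nat_iso_def is_nat_iso_def by simp_all

lemma gamma_in_hom [intro]: "g \<in> carrier G \<Longrightarrow> h \<in> carrier G \<Longrightarrow> a \<in> obj C \<Longrightarrow>
    \<gamma> g h a \<in> hom C (T g (T h a)) (T (g \<otimes>\<^bsub>G\<^esub> h) a)"
  by (rule iso_in_hom[OF gamma_iso])

lemma u_monoidal: "is_monoidal_nat_iso C (\<lambda>a. a) (\<lambda>f. f) (\<lambda>a b. idm C (tns C a b)) (idm C (unt C))
    (T \<one>\<^bsub>G\<^esub>) (Tm \<one>\<^bsub>G\<^esub>) (J \<one>\<^bsub>G\<^esub>) (J0 \<one>\<^bsub>G\<^esub>) u"
  using action unfolding is_action_def by blast

lemma u_in_hom [intro]: "a \<in> obj C \<Longrightarrow> u a \<in> hom C a (T \<one>\<^bsub>G\<^esub> a)"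
  using u_monoidal unfolding is_monoidal_nat_iso_def is_nat_iso_def is_nat_trans_def by simp

lemma u_tensor:
  assumes "a \<in> obj C" and "b \<in> obj C"
  shows "u (tns C a b) = cmp C (J \<one>\<^bsub>G\<^esub> a b) (tnsm C (u a) (u b))"
proof -
  have "cmp C (u (tns C a b)) (idm C (tns C a b)) = cmp C (J \<one>\<^bsub>G\<^esub> a b) (tnsm C (u a) (u b))"
    using u_monoidal assms unfolding is_monoidal_nat_iso_def by blast
  then show ?thesis
    using u_in_hom[OF tensor_obj[OF assms]] by simp
qed

lemma u_unit: "u (unt C) = J0 \<one>\<^bsub>G\<^esub>"
proof -
  have "cmp C (u (unt C)) (idm C (unt C)) = J0 \<one>\<^bsub>G\<^esub>"
    using u_monoidal unfolding is_monoidal_nat_iso_def by blast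
  then show ?thesis
    using u_in_hom[OF unit_obj] by simp
qed

lemma Tm_id [simp]: "g \<in> carrier G \<Longrightarrow> a \<in> obj C \<Longrightarrow> Tm g (idm C a) = idm C (T g a)"
  by (rule functor_id[OF T_functor])

lemma Tm_cmp: "g \<in> carrier G \<Longrightarrow> f \<in> hom C a b \<Longrightarrow> k \<in> hom C b c \<Longrightarrow>
    Tm g (cmp C k f) = cmp C (Tm g k) (Tm g f)"
  by (rule functor_cmp[OF T_functor])

definition J_inv :: "'g \<Rightarrow> 'o \<Rightarrow> 'o \<Rightarrow> 'm" where
  "J_inv g a b = inv_arr C (J g a b) (tns C (T g a) (T g b)) (T g (tns C a b))"

definition J0_inv :: "'g \<Rightarrow> 'm" where
  "J0_inv g = inv_arr C (J0 g) (unt C) (T g (unt C))"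

lemma J_inv_iso: "g \<in> carrier G \<Longrightarrow> a \<in> obj C \<Longrightarrow> b \<in> obj C \<Longrightarrow>
    is_iso C (J_inv g a b) (T g (tns C a b)) (tns C (T g a) (T g b))"
  unfolding J_inv_def by (rule iso_inv_arr[OF J_iso])

lemma J_inv_in_hom [intro]: "g \<in> carrier G \<Longrightarrow> a \<in> obj C \<Longrightarrow> b \<in> obj C \<Longrightarrow>
    J_inv g a b \<in> hom C (T g (tns C a b)) (tns C (T g a) (T g b))"
  by (rule iso_in_hom[OF J_inv_iso])

lemma J0_inv_iso: "g \<in> carrier G \<Longrightarrow> is_iso C (J0_inv g) (T g (unt C)) (unt C)"
  unfolding J0_inv_def by (rule iso_inv_arr[OF J0_iso])

lemma J_inv_natural:
  assumes g: "g \<in> carrier G" and f: "f \<in> hom C a a'" and k: "k \<in> hom C b b'"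
  shows "cmp C (J_inv g a' b') (Tm g (tnsm C f k)) = cmp C (tnsm C (Tm g f) (Tm g k)) (J_inv g a b)"
  unfolding J_inv_def
  by (rule inv_arr_square[OF J_iso[OF g hom_dom_obj[OF f] hom_dom_obj[OF k]]
        J_iso[OF g hom_cod_obj[OF f] hom_cod_obj[OF k]]
        tensor_in_hom[OF Tm_in_hom[OF g f] Tm_in_hom[OF g k]] Tm_in_hom[OF g tensor_in_hom[OF f k]]
        J_natural[OF g f k]])

lemma J_inv_gamma:
  assumes g: "g \<in> carrier G" and h: "h \<in> carrier G" and a: "a \<in> obj C" and b: "b \<in> obj C"
  shows "cmp C (J_inv (g \<otimes>\<^bsub>G\<^esub> h) a b) (\<gamma> g h (tns C a b))
    = cmp C (tnsm C (\<gamma> g h a) (\<gamma> g h b)) (cmp C (J_inv g (T h a) (T h b)) (Tm g (J_inv h a b)))"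
proof -
  have Jh: "is_iso C (J h a b) (tns C (T h a) (T h b)) (T h (tns C a b))"
    and Jg: "is_iso C (J g (T h a) (T h b)) (tns C (T g (T h a)) (T g (T h b))) (T g (tns C (T h a) (T h b)))"
    using J_iso g h a b by blast+
  note K = iso_cmp[OF Jg functor_iso[OF T_functor[OF g] Jh]]
  have "cmp C (J_inv (g \<otimes>\<^bsub>G\<^esub> h) a b) (\<gamma> g h (tns C a b))
      = cmp C (tnsm C (\<gamma> g h a) (\<gamma> g h b))
          (inv_arr C (cmp C (Tm g (J h a b)) (J g (T h a) (T h b)))
            (tns C (T g (T h a)) (T g (T h b))) (T g (T h (tns C a b))))"
    unfolding J_inv_def
    by (rule inv_arr_square[OF K J_iso[OF mult_closed[OF g h] a b]
          tensor_in_hom[OF gamma_in_hom[OF g h a] gamma_in_hom[OF g h b]]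
          gamma_in_hom[OF g h tensor_obj[OF a b]] gamma_tensor[OF g h a b, symmetric]])
  also have "\<dots> = cmp C (tnsm C (\<gamma> g h a) (\<gamma> g h b)) (cmp C (J_inv g (T h a) (T h b)) (Tm g (J_inv h a b)))"
    unfolding inv_arr_cmp[OF Jg functor_iso[OF T_functor[OF g] Jh]] functor_inv_arr[OF T_functor[OF g] Jh]
      J_inv_def ..
  finally show ?thesis .
qed

lemma J_inv_unit:
  assumes a: "a \<in> obj C" and b: "b \<in> obj C"
  shows "cmp C (J_inv \<one>\<^bsub>G\<^esub> a b) (u (tns C a b)) = tnsm C (u a) (u b)"
proof -
  note J1 = J_iso[OF one_closed a b]
  have "cmp C (J_inv \<one>\<^bsub>G\<^esub> a b) (u (tns C a b))
      = cmp C (cmp C (J_inv \<one>\<^bsub>G\<^esub> a b) (J \<one>\<^bsub>G\<^esub> a b)) (tnsm C (u a) (u b))"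
    unfolding u_tensor[OF a b]
    using comp_assoc[OF tensor_in_hom[OF u_in_hom[OF a] u_in_hom[OF b]] iso_in_hom[OF J1]
        J_inv_in_hom[OF one_closed a b]] by simp
  then show ?thesis
    using inv_arr_left[OF J1] tensor_in_hom[OF u_in_hom[OF a] u_in_hom[OF b]]
    unfolding J_inv_def by simp
qed

lemma unit_equivariant: "is_equivariant_object G C T Tm \<gamma> u (unt C) J0_inv"
  unfolding is_equivariant_object_def
proof (intro conjI ballI)
  fix g h assume g: "g \<in> carrier G" and h: "h \<in> carrier G"
  note K = iso_cmp[OF J0_iso[OF g] functor_iso[OF T_functor[OF g] J0_iso[OF h]]]
  have "cmp C (J0_inv (g \<otimes>\<^bsub>G\<^esub> h)) (\<gamma> g h (unt C))
      = cmp C (idm C (unt C)) (inv_arr C (cmp C (Tm g (J0 h)) (J0 g)) (unt C) (T g (T h (unt C))))"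
    unfolding J0_inv_def
  proof (rule inv_arr_square[OF K J0_iso[OF mult_closed[OF g h]]])
    show "cmp C (J0 (g \<otimes>\<^bsub>G\<^esub> h)) (idm C (unt C)) = cmp C (\<gamma> g h (unt C)) (cmp C (Tm g (J0 h)) (J0 g))"
      using gamma_unit[OF g h] iso_in_hom[OF J0_iso[OF mult_closed[OF g h]]] by simp
  qed (use g h in blast)+
  also have "\<dots> = cmp C (J0_inv g) (Tm g (J0_inv h))"
    using inv_arr_cmp[OF J0_iso[OF g] functor_iso[OF T_functor[OF g] J0_iso[OF h]]]
      functor_inv_arr[OF T_functor[OF g] J0_iso[OF h]] iso_in_hom[OF iso_inv_arr[OF K]]
    unfolding J0_inv_def by simp
  finally show "cmp C (J0_inv (g \<otimes>\<^bsub>G\<^esub> h)) (\<gamma> g h (unt C)) = cmp C (J0_inv g) (Tm g (J0_inv h))" .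
next
  show "cmp C (J0_inv \<one>\<^bsub>G\<^esub>) (u (unt C)) = idm C (unt C)"
    unfolding u_unit J0_inv_def by (rule inv_arr_left[OF J0_iso[OF one_closed]])
qed (rule J0_inv_iso)

definition tensor_structure_of :: "'o \<Rightarrow> ('g \<Rightarrow> 'o \<Rightarrow> 'm) \<Rightarrow> 'o \<Rightarrow> ('g \<Rightarrow> 'm) \<Rightarrow> 'g \<Rightarrow> 'm" where
  "tensor_structure_of X \<sigma> Y \<phi> g = cmp C (tnsm C (idm C X) (\<phi> g)) (\<sigma> g Y)"

context
  fixes X Y :: 'o and \<sigma> :: "'g \<Rightarrow> 'o \<Rightarrow> 'm" and \<phi> :: "'g \<Rightarrow> 'm"
  assumes X: "X \<in> obj C" and Y: "Y \<in> obj C"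
    and \<sigma>: "is_partially_equivariant_object G C T Tm \<gamma> u X \<sigma>"
    and \<phi>: "is_equivariant_object G C T Tm \<gamma> u Y \<phi>"
begin

lemma id_tensor_equivariant_in_hom: "g \<in> carrier G \<Longrightarrow>
    tnsm C (idm C X) (\<phi> g) \<in> hom C (tns C X (T g Y)) (tns C X Y)"
  by (rule tensor_in_hom[OF id_in_hom[OF X] equivariant_object_in_hom[OF \<phi>]])

lemma tensor_structure_of_in_hom: "g \<in> carrier G \<Longrightarrow>
    tensor_structure_of X \<sigma> Y \<phi> g \<in> hom C (T g (tns C X Y)) (tns C X Y)"
  unfolding tensor_structure_of_def
  by (rule comp_in_hom[OF partially_equivariant_object_in_hom[OF \<sigma> _ Y] id_tensor_equivariant_in_hom])

lemma tensor_structure_of_iso: "g \<in> carrier G \<Longrightarrow>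
    is_iso C (tensor_structure_of X \<sigma> Y \<phi> g) (T g (tns C X Y)) (tns C X Y)"
  unfolding tensor_structure_of_def
  by (rule iso_cmp[OF partially_equivariant_object_iso[OF \<sigma> _ Y]
        iso_tensor[OF iso_id[OF X] equivariant_object_iso[OF \<phi>]]])

lemma id_tensor_equivariant_cocycle:
  assumes g: "g \<in> carrier G" and h: "h \<in> carrier G"
  shows "cmp C (tnsm C (idm C X) (\<phi> (g \<otimes>\<^bsub>G\<^esub> h))) (tnsm C (idm C X) (\<gamma> g h Y))
    = cmp C (tnsm C (idm C X) (\<phi> g)) (tnsm C (idm C X) (Tm g (\<phi> h)))"
proof -
  have "cmp C (tnsm C (idm C X) (\<phi> (g \<otimes>\<^bsub>G\<^esub> h))) (tnsm C (idm C X) (\<gamma> g h Y))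
      = tnsm C (idm C X) (cmp C (\<phi> (g \<otimes>\<^bsub>G\<^esub> h)) (\<gamma> g h Y))"
    by (rule id_tensor_cmp[OF X gamma_in_hom[OF g h Y] equivariant_object_in_hom[OF \<phi> mult_closed[OF g h]],
          symmetric])
  also have "\<dots> = tnsm C (idm C X) (cmp C (\<phi> g) (Tm g (\<phi> h)))"
    using equivariant_object_cocycle[OF \<phi> g h] by simp
  also have "\<dots> = cmp C (tnsm C (idm C X) (\<phi> g)) (tnsm C (idm C X) (Tm g (\<phi> h)))"
    by (rule id_tensor_cmp[OF X Tm_in_hom[OF g equivariant_object_in_hom[OF \<phi> h]] equivariant_object_in_hom[OF \<phi> g]])
  finally show ?thesis .
qed

lemma tensor_structure_of_cocycle:
  assumes g: "g \<in> carrier G" and h: "h \<in> carrier G"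
  shows "cmp C (tensor_structure_of X \<sigma> Y \<phi> (g \<otimes>\<^bsub>G\<^esub> h)) (\<gamma> g h (tns C X Y))
    = cmp C (tensor_structure_of X \<sigma> Y \<phi> g) (Tm g (tensor_structure_of X \<sigma> Y \<phi> h))"
proof -
  note gh = mult_closed[OF g h] and \<sigma>_hom = partially_equivariant_object_in_hom[OF \<sigma>]
    and X\<phi>_hom = id_tensor_equivariant_in_hom
  have ThY: "T h Y \<in> obj C"
    using h Y by blast
  have T\<sigma>_hom: "Tm g (\<sigma> h Y) \<in> hom C (T g (T h (tns C X Y))) (T g (tns C X (T h Y)))"
    by (rule Tm_in_hom[OF g \<sigma>_hom[OF h Y]])
  have XT\<phi>_hom: "tnsm C (idm C X) (Tm g (\<phi> h)) \<in> hom C (tns C X (T g (T h Y))) (tns C X (T g Y))"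
    by (rule tensor_in_hom[OF id_in_hom[OF X] Tm_in_hom[OF g equivariant_object_in_hom[OF \<phi> h]]])
  define S where "S = cmp C (\<sigma> g (T h Y)) (Tm g (\<sigma> h Y))"
  have S_hom: "S \<in> hom C (T g (T h (tns C X Y))) (tns C X (T g (T h Y)))"
    unfolding S_def by (rule comp_in_hom[OF T\<sigma>_hom \<sigma>_hom[OF g ThY]])
  have "cmp C (tensor_structure_of X \<sigma> Y \<phi> (g \<otimes>\<^bsub>G\<^esub> h)) (\<gamma> g h (tns C X Y))
      = cmp C (tnsm C (idm C X) (\<phi> (g \<otimes>\<^bsub>G\<^esub> h))) (cmp C (\<sigma> (g \<otimes>\<^bsub>G\<^esub> h) Y) (\<gamma> g h (tns C X Y)))"
    unfolding tensor_structure_of_def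
    by (rule comp_assoc[OF gamma_in_hom[OF g h tensor_obj[OF X Y]] \<sigma>_hom[OF gh Y] X\<phi>_hom[OF gh]])
  also have "\<dots> = cmp C (tnsm C (idm C X) (\<phi> (g \<otimes>\<^bsub>G\<^esub> h))) (cmp C (tnsm C (idm C X) (\<gamma> g h Y)) S)"
    unfolding S_def using partially_equivariant_object_cocycle[OF \<sigma> g h Y] by simp
  also have "\<dots> = cmp C (cmp C (tnsm C (idm C X) (\<phi> g)) (tnsm C (idm C X) (Tm g (\<phi> h)))) S"
    using comp_assoc[OF S_hom tensor_in_hom[OF id_in_hom[OF X] gamma_in_hom[OF g h Y]] X\<phi>_hom[OF gh]]
      id_tensor_equivariant_cocycle[OF g h] by simp
  also have "\<dots> = cmp C (tnsm C (idm C X) (\<phi> g))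
      (cmp C (cmp C (tnsm C (idm C X) (Tm g (\<phi> h))) (\<sigma> g (T h Y))) (Tm g (\<sigma> h Y)))"
    unfolding S_def
    using comp_assoc[OF S_hom[unfolded S_def] XT\<phi>_hom X\<phi>_hom[OF g]]
      comp_assoc[OF T\<sigma>_hom \<sigma>_hom[OF g ThY] XT\<phi>_hom] by simp
  also have "\<dots> = cmp C (tnsm C (idm C X) (\<phi> g))
      (cmp C (cmp C (\<sigma> g Y) (Tm g (tnsm C (idm C X) (\<phi> h)))) (Tm g (\<sigma> h Y)))"
    using partially_equivariant_object_natural[OF \<sigma> g equivariant_object_in_hom[OF \<phi> h]] by simp
  also have "\<dots> = cmp C (tnsm C (idm C X) (\<phi> g)) (cmp C (\<sigma> g Y) (Tm g (tensor_structure_of X \<sigma> Y \<phi> h)))"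
    unfolding tensor_structure_of_def
    using comp_assoc[OF T\<sigma>_hom Tm_in_hom[OF g X\<phi>_hom[OF h]] \<sigma>_hom[OF g Y]]
      Tm_cmp[OF g \<sigma>_hom[OF h Y] X\<phi>_hom[OF h]] by simp
  also have "\<dots> = cmp C (tensor_structure_of X \<sigma> Y \<phi> g) (Tm g (tensor_structure_of X \<sigma> Y \<phi> h))"
    unfolding tensor_structure_of_def
    using comp_assoc[OF Tm_in_hom[OF g tensor_structure_of_in_hom[OF h]] \<sigma>_hom[OF g Y] X\<phi>_hom[OF g]]
    by (simp add: tensor_structure_of_def)
  finally show ?thesis .
qed

lemma tensor_structure_of_unit:
  "cmp C (tensor_structure_of X \<sigma> Y \<phi> \<one>\<^bsub>G\<^esub>) (u (tns C X Y)) = idm C (tns C X Y)"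
proof -
  have "cmp C (tensor_structure_of X \<sigma> Y \<phi> \<one>\<^bsub>G\<^esub>) (u (tns C X Y))
      = cmp C (tnsm C (idm C X) (\<phi> \<one>\<^bsub>G\<^esub>)) (cmp C (\<sigma> \<one>\<^bsub>G\<^esub> Y) (u (tns C X Y)))"
    unfolding tensor_structure_of_def
    by (rule comp_assoc[OF u_in_hom[OF tensor_obj[OF X Y]] partially_equivariant_object_in_hom[OF \<sigma> one_closed Y]
          id_tensor_equivariant_in_hom[OF one_closed]])
  also have "\<dots> = cmp C (tnsm C (idm C X) (\<phi> \<one>\<^bsub>G\<^esub>)) (tnsm C (idm C X) (u Y))"
    using partially_equivariant_object_unit[OF \<sigma> Y] by simp
  also have "\<dots> = tnsm C (idm C X) (cmp C (\<phi> \<one>\<^bsub>G\<^esub>) (u Y))"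
    by (rule id_tensor_cmp[OF X u_in_hom[OF Y] equivariant_object_in_hom[OF \<phi> one_closed], symmetric])
  also have "\<dots> = idm C (tns C X Y)"
    using equivariant_object_unit[OF \<phi>] X Y by simp
  finally show ?thesis .
qed

lemma tensor_structure_of_equivariant:
  "is_equivariant_object G C T Tm \<gamma> u (tns C X Y) (tensor_structure_of X \<sigma> Y \<phi>)"
  unfolding is_equivariant_object_def
  using tensor_structure_of_iso tensor_structure_of_cocycle tensor_structure_of_unit by simp

end

lemma partially_equivariant_imp_equivariant:
  assumes X: "X \<in> obj C" and \<sigma>: "is_partially_equivariant_object G C T Tm \<gamma> u X \<sigma>"
  shows "\<exists>\<theta>. is_equivariant_object G C T Tm \<gamma> u X \<theta>"
  using tensor_structure_of_equivariant[OF X unit_obj \<sigma> unit_equivariant] X by auto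

definition partial_structure_of :: "'o \<Rightarrow> ('g \<Rightarrow> 'm) \<Rightarrow> 'g \<Rightarrow> 'o \<Rightarrow> 'm" where
  "partial_structure_of X \<theta> g Y = cmp C (tnsm C (\<theta> g) (idm C (T g Y))) (J_inv g X Y)"

context
  fixes X :: 'o and \<theta> :: "'g \<Rightarrow> 'm"
  assumes X: "X \<in> obj C" and \<theta>: "is_equivariant_object G C T Tm \<gamma> u X \<theta>"
begin

lemma equivariant_tensor_id_in_hom:
  "g \<in> carrier G \<Longrightarrow> a \<in> obj C \<Longrightarrow> tnsm C (\<theta> g) (idm C a) \<in> hom C (tns C (T g X) a) (tns C X a)"
  using tensor_in_hom[OF equivariant_object_in_hom[OF \<theta>] id_in_hom] .

lemma partial_structure_of_iso:
  "g \<in> carrier G \<Longrightarrow> Y \<in> obj C \<Longrightarrow>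
   is_iso C (partial_structure_of X \<theta> g Y) (T g (tns C X Y)) (tns C X (T g Y))"
  unfolding partial_structure_of_def
  by (rule iso_cmp[OF J_inv_iso[OF _ X] iso_tensor[OF equivariant_object_iso[OF \<theta>] iso_id[OF T_obj]]])

lemma partial_structure_of_natural:
  assumes g: "g \<in> carrier G" and f: "f \<in> hom C Y Y'"
  shows "cmp C (partial_structure_of X \<theta> g Y') (Tm g (tnsm C (idm C X) f))
    = cmp C (tnsm C (idm C X) (Tm g f)) (partial_structure_of X \<theta> g Y)"
proof -
  have Y: "Y \<in> obj C" and Y': "Y' \<in> obj C"
    using f by (rule hom_dom_obj, rule hom_cod_obj)
  note Tf = Tm_in_hom[OF g f] and \<theta>g = equivariant_object_in_hom[OF \<theta> g]
  have "cmp C (partial_structure_of X \<theta> g Y') (Tm g (tnsm C (idm C X) f))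
      = cmp C (tnsm C (\<theta> g) (idm C (T g Y'))) (cmp C (J_inv g X Y') (Tm g (tnsm C (idm C X) f)))"
    unfolding partial_structure_of_def
    by (rule comp_assoc[OF Tm_in_hom[OF g tensor_in_hom[OF id_in_hom[OF X] f]] J_inv_in_hom[OF g X Y']
          equivariant_tensor_id_in_hom[OF g T_obj[OF g Y']]])
  also have "\<dots> = cmp C (tnsm C (\<theta> g) (idm C (T g Y'))) (cmp C (tnsm C (idm C (T g X)) (Tm g f)) (J_inv g X Y))"
    using J_inv_natural[OF g id_in_hom[OF X] f] g X by simp
  also have "\<dots> = cmp C (cmp C (tnsm C (\<theta> g) (idm C (T g Y'))) (tnsm C (idm C (T g X)) (Tm g f))) (J_inv g X Y)"
    by (rule comp_assoc[OF J_inv_in_hom[OF g X Y] tensor_in_hom[OF id_in_hom[OF T_obj[OF g X]] Tf]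
          equivariant_tensor_id_in_hom[OF g T_obj[OF g Y']], symmetric])
  also have "\<dots> = cmp C (cmp C (tnsm C (idm C X) (Tm g f)) (tnsm C (\<theta> g) (idm C (T g Y)))) (J_inv g X Y)"
    using tensor_as_cmp[OF \<theta>g Tf] by simp
  also have "\<dots> = cmp C (tnsm C (idm C X) (Tm g f)) (partial_structure_of X \<theta> g Y)"
    unfolding partial_structure_of_def
    by (rule comp_assoc[OF J_inv_in_hom[OF g X Y] equivariant_tensor_id_in_hom[OF g T_obj[OF g Y]]
          tensor_in_hom[OF id_in_hom[OF X] Tf]])
  finally show ?thesis .
qed

lemma partial_structure_of_comp:
  assumes g: "g \<in> carrier G" and h: "h \<in> carrier G" and Y: "Y \<in> obj C"
  shows "cmp C (partial_structure_of X \<theta> g (T h Y)) (Tm g (partial_structure_of X \<theta> h Y))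
    = cmp C (tnsm C (cmp C (\<theta> g) (Tm g (\<theta> h))) (idm C (T g (T h Y))))
        (cmp C (J_inv g (T h X) (T h Y)) (Tm g (J_inv h X Y)))"
proof -
  have ThX: "T h X \<in> obj C" and ThY: "T h Y \<in> obj C" and TgThY: "T g (T h Y) \<in> obj C"
    using g h X Y by blast+
  have T\<theta>h: "Tm g (\<theta> h) \<in> hom C (T g (T h X)) (T g X)"
    by (rule Tm_in_hom[OF g equivariant_object_in_hom[OF \<theta> h]])
  note TJh = Tm_in_hom[OF g J_inv_in_hom[OF h X Y]]
    and T\<theta>h_id = Tm_in_hom[OF g equivariant_tensor_id_in_hom[OF h ThY]]
    and T\<theta>h_id' = tensor_in_hom[OF T\<theta>h id_in_hom[OF TgThY]]
    and \<theta>g_id = equivariant_tensor_id_in_hom[OF g TgThY]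
  have "cmp C (partial_structure_of X \<theta> g (T h Y)) (Tm g (partial_structure_of X \<theta> h Y))
      = cmp C (tnsm C (\<theta> g) (idm C (T g (T h Y))))
          (cmp C (cmp C (J_inv g X (T h Y)) (Tm g (tnsm C (\<theta> h) (idm C (T h Y))))) (Tm g (J_inv h X Y)))"
    unfolding partial_structure_of_def
    using Tm_cmp[OF g J_inv_in_hom[OF h X Y] equivariant_tensor_id_in_hom[OF h ThY]]
      comp_assoc[OF comp_in_hom[OF TJh T\<theta>h_id] J_inv_in_hom[OF g X ThY] \<theta>g_id]
      comp_assoc[OF TJh T\<theta>h_id J_inv_in_hom[OF g X ThY]] by simp
  also have "\<dots> = cmp C (tnsm C (\<theta> g) (idm C (T g (T h Y))))
      (cmp C (cmp C (tnsm C (Tm g (\<theta> h)) (idm C (T g (T h Y)))) (J_inv g (T h X) (T h Y)))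
        (Tm g (J_inv h X Y)))"
    using J_inv_natural[OF g equivariant_object_in_hom[OF \<theta> h] id_in_hom[OF ThY]] g ThY by simp
  also have "\<dots> = cmp C (cmp C (tnsm C (\<theta> g) (idm C (T g (T h Y)))) (tnsm C (Tm g (\<theta> h)) (idm C (T g (T h Y)))))
      (cmp C (J_inv g (T h X) (T h Y)) (Tm g (J_inv h X Y)))"
    using comp_assoc[OF TJh J_inv_in_hom[OF g ThX ThY] T\<theta>h_id']
      comp_assoc[OF comp_in_hom[OF TJh J_inv_in_hom[OF g ThX ThY]] T\<theta>h_id' \<theta>g_id] by simp
  also have "\<dots> = cmp C (tnsm C (cmp C (\<theta> g) (Tm g (\<theta> h))) (idm C (T g (T h Y))))
      (cmp C (J_inv g (T h X) (T h Y)) (Tm g (J_inv h X Y)))"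
    using cmp_tensor_id[OF TgThY T\<theta>h equivariant_object_in_hom[OF \<theta> g]] by simp
  finally show ?thesis .
qed

lemma partial_structure_of_cocycle:
  assumes g: "g \<in> carrier G" and h: "h \<in> carrier G" and Y: "Y \<in> obj C"
  shows "cmp C (partial_structure_of X \<theta> (g \<otimes>\<^bsub>G\<^esub> h) Y) (\<gamma> g h (tns C X Y))
    = cmp C (tnsm C (idm C X) (\<gamma> g h Y))
        (cmp C (partial_structure_of X \<theta> g (T h Y)) (Tm g (partial_structure_of X \<theta> h Y)))"
proof -
  note gh = mult_closed[OF g h]
  have ThX: "T h X \<in> obj C" and ThY: "T h Y \<in> obj C" and TgThY: "T g (T h Y) \<in> obj C"
    using g h X Y by blast+
  define R where "R = cmp C (J_inv g (T h X) (T h Y)) (Tm g (J_inv h X Y))"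
  have R_hom: "R \<in> hom C (T g (T h (tns C X Y))) (tns C (T g (T h X)) (T g (T h Y)))"
    unfolding R_def by (rule comp_in_hom[OF Tm_in_hom[OF g J_inv_in_hom[OF h X Y]] J_inv_in_hom[OF g ThX ThY]])
  define c where "c = cmp C (\<theta> g) (Tm g (\<theta> h))"
  have c_hom: "c \<in> hom C (T g (T h X)) X"
    unfolding c_def
    by (rule comp_in_hom[OF Tm_in_hom[OF g equivariant_object_in_hom[OF \<theta> h]] equivariant_object_in_hom[OF \<theta> g]])
  have "cmp C (partial_structure_of X \<theta> (g \<otimes>\<^bsub>G\<^esub> h) Y) (\<gamma> g h (tns C X Y))
      = cmp C (tnsm C (\<theta> (g \<otimes>\<^bsub>G\<^esub> h)) (idm C (T (g \<otimes>\<^bsub>G\<^esub> h) Y)))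
          (cmp C (tnsm C (\<gamma> g h X) (\<gamma> g h Y)) R)"
    unfolding partial_structure_of_def R_def J_inv_gamma[OF g h X Y, symmetric]
    by (rule comp_assoc[OF gamma_in_hom[OF g h tensor_obj[OF X Y]] J_inv_in_hom[OF gh X Y]
          equivariant_tensor_id_in_hom[OF gh T_obj[OF gh Y]]])
  also have "\<dots> = cmp C (tnsm C c (\<gamma> g h Y)) R"
    using comp_assoc[OF R_hom tensor_in_hom[OF gamma_in_hom[OF g h X] gamma_in_hom[OF g h Y]]
        equivariant_tensor_id_in_hom[OF gh T_obj[OF gh Y]]]
      interchange[OF gamma_in_hom[OF g h X] equivariant_object_in_hom[OF \<theta> gh] gamma_in_hom[OF g h Y]
        id_in_hom[OF T_obj[OF gh Y]]]
      equivariant_object_cocycle[OF \<theta> g h] gamma_in_hom[OF g h Y]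
    unfolding c_def by simp
  also have "\<dots> = cmp C (tnsm C (idm C X) (\<gamma> g h Y)) (cmp C (tnsm C c (idm C (T g (T h Y)))) R)"
    using tensor_as_cmp(2)[OF c_hom gamma_in_hom[OF g h Y]]
      comp_assoc[OF R_hom tensor_in_hom[OF c_hom id_in_hom[OF TgThY]]
        tensor_in_hom[OF id_in_hom[OF X] gamma_in_hom[OF g h Y]]] by simp
  also have "\<dots> = cmp C (tnsm C (idm C X) (\<gamma> g h Y))
      (cmp C (partial_structure_of X \<theta> g (T h Y)) (Tm g (partial_structure_of X \<theta> h Y)))"
    unfolding partial_structure_of_comp[OF g h Y] R_def c_def ..
  finally show ?thesis .
qed

lemma partial_structure_of_unit:
  assumes Y: "Y \<in> obj C"
  shows "cmp C (partial_structure_of X \<theta> \<one>\<^bsub>G\<^esub> Y) (u (tns C X Y)) = tnsm C (idm C X) (u Y)"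
proof -
  have "cmp C (partial_structure_of X \<theta> \<one>\<^bsub>G\<^esub> Y) (u (tns C X Y))
      = cmp C (tnsm C (\<theta> \<one>\<^bsub>G\<^esub>) (idm C (T \<one>\<^bsub>G\<^esub> Y))) (tnsm C (u X) (u Y))"
    unfolding partial_structure_of_def J_inv_unit[OF X Y, symmetric]
    by (rule comp_assoc[OF u_in_hom[OF tensor_obj[OF X Y]] J_inv_in_hom[OF one_closed X Y]
          equivariant_tensor_id_in_hom[OF one_closed T_obj[OF one_closed Y]]])
  also have "\<dots> = tnsm C (cmp C (\<theta> \<one>\<^bsub>G\<^esub>) (u X)) (cmp C (idm C (T \<one>\<^bsub>G\<^esub> Y)) (u Y))"
    by (rule interchange[OF u_in_hom[OF X] equivariant_object_in_hom[OF \<theta> one_closed] u_in_hom[OF Y]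
          id_in_hom[OF T_obj[OF one_closed Y]], symmetric])
  also have "\<dots> = tnsm C (idm C X) (u Y)"
    using equivariant_object_unit[OF \<theta>] u_in_hom[OF Y] by simp
  finally show ?thesis .
qed

lemma equivariant_imp_partially_equivariant:
  "is_partially_equivariant_object G C T Tm \<gamma> u X (partial_structure_of X \<theta>)"
  unfolding is_partially_equivariant_object_def is_nat_iso_def is_nat_trans_def
proof (intro conjI ballI allI impI)
qed (simp_all add: partial_structure_of_iso iso_in_hom[OF partial_structure_of_iso]
    partial_structure_of_natural partial_structure_of_cocycle partial_structure_of_unit)

end

end

theorem theorem6p4:
  fixes G :: "('g, 'y) monoid_scheme"
    and C :: "('o, 'm, 'x) smcat_scheme"
    and T :: "'g \<Rightarrow> 'o \<Rightarrow> 'o" and Tm :: "'g \<Rightarrow> 'm \<Rightarrow> 'm"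
    and J :: "'g \<Rightarrow> 'o \<Rightarrow> 'o \<Rightarrow> 'm" and J0 :: "'g \<Rightarrow> 'm"
    and \<gamma> :: "'g \<Rightarrow> 'g \<Rightarrow> 'o \<Rightarrow> 'm" and u :: "'o \<Rightarrow> 'm"
    and X :: 'o
  assumes "is_action G C T Tm J J0 \<gamma> u"
    and "X \<in> obj C"
  shows "(\<forall>\<sigma>. is_partially_equivariant_object G C T Tm \<gamma> u X \<sigma> \<longrightarrow>
            (\<exists>\<theta>. is_equivariant_object G C T Tm \<gamma> u X \<theta>)) \<and>
         (\<forall>\<theta>. is_equivariant_object G C T Tm \<gamma> u X \<theta> \<longrightarrow>
            (\<exists>\<sigma>. is_partially_equivariant_object G C T Tm \<gamma> u X \<sigma>))"
proof -
  interpret group_action G C T Tm J J0 \<gamma> u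
    by (rule group_action.intro) (fact assms(1))
  show ?thesis
  proof (intro conjI allI impI)
    fix \<sigma> assume "is_partially_equivariant_object G C T Tm \<gamma> u X \<sigma>"
    then show "\<exists>\<theta>. is_equivariant_object G C T Tm \<gamma> u X \<theta>"
      by (rule partially_equivariant_imp_equivariant[OF assms(2)])
  next
    fix \<theta> assume "is_equivariant_object G C T Tm \<gamma> u X \<theta>"
    then show "\<exists>\<sigma>. is_partially_equivariant_object G C T Tm \<gamma> u X \<sigma>"
      using equivariant_imp_partially_equivariant[OF assms(2)] by blast
  qed
qed

end
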